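(* Fix $\mu\in\mathbb{C}$. Two rational functions $r_1(z),r_2(z)\in\mathbb{C}(z)^\times$ yield isomorphic $\mathfrak{sl}(2)$-modules $(\mathbb{C}(z),\rho^{(\mu)}_{r_1})\cong(\mathbb{C}(z),\rho^{(\mu)}_{r_2})$ if and only if there exist $\alpha_1,\dots,\alpha_n\in\mathbb{C}$ and $a_1,\dots,a_n\in\mathbb{Z}$ such that $$\frac{r_2(z)}{r_1(z)}=\prod_{i=1}^n\frac{z-\alpha_i}{z+a_i-\alpha_i}.$$
   Context: $\mathfrak{sl}(2)$ has basis $L_{-1}=f$, $L_0=-\tfrac12 h$, $L_1=-e$ for a Chevalley basis $e,f,h$ ($[e,f]=h$, $[h,e]=2e$, $[h,f]=-2f$). Let $\nabla$ be the $\mathbb{C}$-linear automorphism of $\mathbb{C}(z)$ given by $\nabla(g)(z)=g(z+1)$, and $\pi_\mu(z)=z(z-1)-\mu$. For $r(z)\in\mathbb{C}(z)^\times$, $\rho^{(\mu)}_r$ is the $\mathfrak{sl}(2)$-representation on the one-dimensional $\mathbb{C}(z)$-vector space $\mathbb{C}(z)$ given by $\rho^{(\mu)}_r(L_{-1})=\frac{\pi_\mu(z)}{r(z-1)}\circ\nabla^{-1}$, $\rho^{(\mu)}_r(L_0)=$ multiplication by $z$, $\rho^{(\mu)}_r(L_1)=r(z)\circ\nabla$ (a Casimir module of level $\mu$). *)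

theory Defs
  imports "HOL-Computational_Algebra.Computational_Algebra"
          "HOL-Computational_Algebra.Polynomial_Factorial"
          "HOL-Computational_Algebra.Normalized_Fraction"
          "HOL-Computational_Algebra.Field_as_Ring"
begin

type_synonym ratfun = "complex poly fract"

definition rf_poly :: "complex poly \<Rightarrow> ratfun" where
  "rf_poly p = Fract p 1"

definition rf_const :: "complex \<Rightarrow> ratfun" where
  "rf_const c = rf_poly [:c:]"

definition rf_z :: ratfun where
  "rf_z = rf_poly [:0, 1:]"

definition rf_shift :: "complex \<Rightarrow> ratfun \<Rightarrow> ratfun" where
  "rf_shift t g = (case quot_of_fract g of (p, q) \<Rightarrow>
      Fract (pcompose p [:t, 1:]) (pcompose q [:t, 1:]))"

definition nabla :: "ratfun \<Rightarrow> ratfun" where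
  "nabla = rf_shift 1"

definition nabla_inv :: "ratfun \<Rightarrow> ratfun" where
  "nabla_inv = rf_shift (-1)"

definition pi_mu :: "complex \<Rightarrow> ratfun" where
  "pi_mu \<mu> = rf_z * (rf_z - 1) - rf_const \<mu>"

datatype sl2_basis = Lm1 | L0 | L1

fun casimir_rep :: "complex \<Rightarrow> ratfun \<Rightarrow> sl2_basis \<Rightarrow> ratfun \<Rightarrow> ratfun" where
  "casimir_rep \<mu> r Lm1 g = (pi_mu \<mu> / nabla_inv r) * nabla_inv g"
| "casimir_rep \<mu> r L0 g = rf_z * g"
| "casimir_rep \<mu> r L1 g = r * nabla g"

text \<open>Isomorphism of sl(2)-modules: a C-linear bijection intertwining the action
  of the basis (hence of all of sl(2), by linearity).\<close>
definition sl2_iso :: "(sl2_basis \<Rightarrow> ratfun \<Rightarrow> ratfun) \<Rightarrow> (sl2_basis \<Rightarrow> ratfun \<Rightarrow> ratfun) \<Rightarrow> (ratfun \<Rightarrow> ratfun) \<Rightarrow> bool" where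
  "sl2_iso \<rho>1 \<rho>2 \<phi> \<longleftrightarrow>
     bij \<phi>
     \<and> (\<forall>f g. \<phi> (f + g) = \<phi> f + \<phi> g)
     \<and> (\<forall>c f. \<phi> (rf_const c * f) = rf_const c * \<phi> f)
     \<and> (\<forall>x f. \<phi> (\<rho>1 x f) = \<rho>2 x (\<phi> f))"

definition sl2_isomorphic :: "(sl2_basis \<Rightarrow> ratfun \<Rightarrow> ratfun) \<Rightarrow> (sl2_basis \<Rightarrow> ratfun \<Rightarrow> ratfun) \<Rightarrow> bool" where
  "sl2_isomorphic \<rho>1 \<rho>2 \<longleftrightarrow> (\<exists>\<phi>. sl2_iso \<rho>1 \<rho>2 \<phi>)"

end

theory Submission
  imports Defs
begin

text \<open>An isomorphism \<open>\<phi>\<close> commutes with multiplication by \<open>z\<close> and by constants, hence with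
  multiplication by every rational function, so it is multiplication by \<open>h = \<phi> 1 \<noteq> 0\<close>; intertwining
  \<open>L\<^sub>1\<close> then says \<open>r\<^sub>1 h = r\<^sub>2 \<nabla>h\<close>, i.e. \<open>r\<^sub>2/r\<^sub>1 = h/\<nabla>h\<close>, and conversely every such \<open>h\<close> gives an
  isomorphism. The quotients \<open>h/\<nabla>h\<close> form a group, which is generated by the factors
  \<open>(z - \<alpha>)/(z + a - \<alpha>)\<close>: splitting numerator and denominator of \<open>h\<close> into linear factors, each
  \<open>z - \<beta>\<close> contributes \<open>(z - \<beta>)/(z + 1 - \<beta>)\<close>, and conversely
  \<open>(z - \<alpha>)/(z + n - \<alpha>)\<close> telescopes into a product of \<open>n\<close> such quotients.\<close>

lemma pcompose_linear_eq_0_iff: "pcompose p [:t, 1:] = 0 \<longleftrightarrow> p = (0::'a::idom poly)"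
  using pcompose_eq_0[of p "[:t, 1:]"] by auto

lemma rf_shift_Fract:
  assumes "q \<noteq> 0"
  shows "rf_shift t (Fract p q) = Fract (pcompose p [:t, 1:]) (pcompose q [:t, 1:])"
proof -
  obtain p' q' where pq': "quot_of_fract (Fract p q) = (p', q')"
    by (cases "quot_of_fract (Fract p q)")
  have q': "q' \<noteq> 0"
    using snd_quot_of_fract_nonzero[of "Fract p q"] pq' by simp
  have "Fract p' q' = Fract p q"
    using Fract_quot_of_fract[of "Fract p q"] pq' by simp
  then have "p' * q = p * q'"
    using eq_fract(1)[OF q' assms] by simp
  then have "pcompose p' [:t, 1:] * pcompose q [:t, 1:] = pcompose p [:t, 1:] * pcompose q' [:t, 1:]"
    by (metis pcompose_mult)
  then show ?thesis
    using q' assms by (simp add: rf_shift_def pq' eq_fract(1) pcompose_linear_eq_0_iff)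
qed

lemma rf_shift_mult: "rf_shift t (x * y) = rf_shift t x * rf_shift t y"
  by (cases x, cases y) (simp add: rf_shift_Fract pcompose_mult)

lemma rf_shift_1: "rf_shift t 1 = 1"
  by (simp add: One_fract_def rf_shift_Fract pcompose_1)

lemma rf_shift_shift: "rf_shift t (rf_shift u x) = rf_shift (t + u) x"
proof (cases x)
  case (Fract p q)
  have "pcompose [:u, 1:] [:t, 1:] = [:t + u, 1:]"
    by (simp add: pcompose_pCons algebra_simps)
  with Fract show ?thesis
    by (simp add: rf_shift_Fract pcompose_linear_eq_0_iff pcompose_assoc[symmetric])
qed

lemma rf_shift_0: "rf_shift 0 x = x"
  by (cases x) (simp add: rf_shift_Fract)

lemma rf_shift_eq_0_iff: "rf_shift t x = 0 \<longleftrightarrow> x = 0"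
proof -
  have "rf_shift t 0 = 0"
    by (simp add: Zero_fract_def rf_shift_Fract eq_fract(3))
  then show ?thesis
    by (metis rf_shift_shift rf_shift_0 add.left_inverse)
qed

lemma rf_shift_inverse: "rf_shift t (inverse x) = inverse (rf_shift t x)"
  by (metis rf_shift_1 rf_shift_eq_0_iff rf_shift_mult inverse_unique inverse_zero right_inverse)

lemma rf_shift_rf_poly: "rf_shift t (rf_poly p) = rf_poly (pcompose p [:t, 1:])"
  by (simp add: rf_poly_def rf_shift_Fract pcompose_1)

lemma nabla_inv_nabla: "nabla_inv (nabla x) = x"
  by (simp add: nabla_def nabla_inv_def rf_shift_shift rf_shift_0)

lemmas nabla_mult = rf_shift_mult[of 1, folded nabla_def]
  and nabla_inv_mult = rf_shift_mult[of "-1", folded nabla_inv_def]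
  and nabla_1 = rf_shift_1[of 1, folded nabla_def]
  and nabla_eq_0_iff = rf_shift_eq_0_iff[of 1, folded nabla_def]
  and nabla_inverse = rf_shift_inverse[of 1, folded nabla_def]
  and nabla_rf_poly = rf_shift_rf_poly[of 1, folded nabla_def]

lemma rf_poly_mult: "rf_poly (p * q) = rf_poly p * rf_poly q"
  by (simp add: rf_poly_def)

lemma rf_poly_eq_0_iff: "rf_poly p = 0 \<longleftrightarrow> p = 0"
  by (simp add: rf_poly_def Zero_fract_def eq_fract)

lemma rf_poly_pCons: "rf_poly (pCons c p) = rf_const c + rf_z * rf_poly p"
proof -
  have "pCons c p = [:c:] + [:0, 1:] * p"
    by simp
  then show ?thesis
    by (simp add: rf_const_def rf_z_def rf_poly_def)
qed

lemma rf_z_add_const: "rf_z + rf_const c = rf_poly [:c, 1:]"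
  using rf_poly_pCons[of c 1] by (simp add: rf_poly_def One_fract_def one_pCons add.commute)

definition shift_factor :: "complex \<Rightarrow> int \<Rightarrow> ratfun" where
  "shift_factor \<alpha> a = (rf_z - rf_const \<alpha>) / (rf_z + rf_const (of_int a) - rf_const \<alpha>)"

lemma shift_factor_rf_poly: "shift_factor \<alpha> a = rf_poly [:-\<alpha>, 1:] / rf_poly [:of_int a - \<alpha>, 1:]"
proof -
  have "rf_const (- \<alpha>) = - rf_const \<alpha>" "rf_const (of_int a - \<alpha>) = rf_const (of_int a) - rf_const \<alpha>"
    by (simp_all add: rf_const_def rf_poly_def)
  then show ?thesis
    unfolding shift_factor_def rf_z_add_const[symmetric] by (simp add: algebra_simps)
qed

lemma shift_factor_0: "shift_factor \<alpha> 0 = 1"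
  by (simp add: shift_factor_rf_poly rf_poly_eq_0_iff)

lemma shift_factor_inverse: "inverse (shift_factor \<alpha> a) = shift_factor (\<alpha> - of_int a) (- a)"
  by (simp add: shift_factor_rf_poly)

lemma shift_factor_Suc:
  "shift_factor \<alpha> (int (Suc n)) = shift_factor \<alpha> 1 * shift_factor (\<alpha> - 1) (int n)"
  by (simp add: shift_factor_rf_poly rf_poly_eq_0_iff algebra_simps)

inductive_set shift_factor_products :: "ratfun set" where
  one: "1 \<in> shift_factor_products"
| mult_shift_factor: "x \<in> shift_factor_products \<Longrightarrow> x * shift_factor \<alpha> a \<in> shift_factor_products"

lemma shift_factor_products_iff_prod:
  "x \<in> shift_factor_products \<longleftrightarrow>
     (\<exists>(n::nat) (\<alpha>::nat \<Rightarrow> complex) (a::nat \<Rightarrow> int). x = (\<Prod>i<n. shift_factor (\<alpha> i) (a i)))"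
proof
  assume "x \<in> shift_factor_products"
  then show "\<exists>(n::nat) \<alpha> a. x = (\<Prod>i<n. shift_factor (\<alpha> i) (a i))"
  proof induction
    case one
    show ?case
      by (rule exI[of _ 0]) simp
  next
    case (mult_shift_factor y \<beta> b)
    then obtain n :: nat and \<alpha> a where "y = (\<Prod>i<n. shift_factor (\<alpha> i) (a i))"
      by blast
    then have "y * shift_factor \<beta> b = (\<Prod>i<Suc n. shift_factor ((\<alpha>(n := \<beta>)) i) ((a(n := b)) i))"
      by simp
    then show ?case
      by blast
  qed
next
  have "(\<Prod>i<n. shift_factor (\<alpha> i) (a i)) \<in> shift_factor_products" for n :: nat and \<alpha> a
    by (induction n) (auto intro: shift_factor_products.intros)
  then show "\<exists>(n::nat) \<alpha> a. x = (\<Prod>i<n. shift_factor (\<alpha> i) (a i)) \<Longrightarrow> x \<in> shift_factor_products"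
    by blast
qed

lemma shift_factor_products_mult:
  assumes "x \<in> shift_factor_products" and "y \<in> shift_factor_products"
  shows "x * y \<in> shift_factor_products"
  using assms(2)
proof induction
  case (mult_shift_factor y \<alpha> a)
  then show ?case
    using shift_factor_products.mult_shift_factor[of "x * y" \<alpha> a] by (simp add: mult.assoc)
qed (simp add: assms(1))

lemma shift_factor_products_inverse:
  "x \<in> shift_factor_products \<Longrightarrow> inverse x \<in> shift_factor_products"
proof (induction rule: shift_factor_products.induct)
  case (mult_shift_factor x \<alpha> a)
  then show ?case
    using shift_factor_products.mult_shift_factor[of "inverse x" "\<alpha> - of_int a" "- a"]
    by (simp add: shift_factor_inverse)
qed (simp add: shift_factor_products.one)

definition nabla_quotients :: "ratfun set" where
  "nabla_quotients = {h / nabla h | h. h \<noteq> 0}"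

lemma nabla_quotients_1: "1 \<in> nabla_quotients"
  unfolding nabla_quotients_def by (auto intro!: exI[of _ 1] simp: nabla_1)

lemma nabla_quotients_mult:
  assumes "x \<in> nabla_quotients" and "y \<in> nabla_quotients"
  shows "x * y \<in> nabla_quotients"
proof -
  obtain g h where "g \<noteq> 0" "x = g / nabla g" "h \<noteq> 0" "y = h / nabla h"
    using assms unfolding nabla_quotients_def by blast
  then have "g * h \<noteq> 0 \<and> x * y = (g * h) / nabla (g * h)"
    by (simp add: nabla_mult)
  then show ?thesis
    unfolding nabla_quotients_def by blast
qed

lemma nabla_quotients_inverse:
  assumes "x \<in> nabla_quotients"
  shows "inverse x \<in> nabla_quotients"
proof -
  obtain h where "h \<noteq> 0" "x = h / nabla h"
    using assms unfolding nabla_quotients_def by blast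
  then have "inverse h \<noteq> 0 \<and> inverse x = inverse h / nabla (inverse h)"
    by (simp add: nabla_inverse divide_inverse mult.commute)
  then show ?thesis
    unfolding nabla_quotients_def by blast
qed

lemma rf_poly_nabla_quotient_in_shift_factor_products:
  "p \<noteq> 0 \<Longrightarrow> rf_poly p / nabla (rf_poly p) \<in> shift_factor_products"
proof (induction "degree p" arbitrary: p rule: less_induct)
  case less
  show ?case
  proof (cases "degree p = 0")
    case True
    then have "nabla (rf_poly p) = rf_poly p"
      by (metis degree_0_id nabla_rf_poly pcompose_const)
    with less.prems show ?thesis
      by (simp add: rf_poly_eq_0_iff shift_factor_products.one)
  next
    case False
    then have "\<not> constant (poly p)"
      by (simp add: constant_degree)
    then obtain \<beta> where "poly p \<beta> = 0"
      using fundamental_theorem_of_algebra by blast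
    then obtain q where p: "p = [:-\<beta>, 1:] * q"
      by (metis dvdE poly_eq_0_iff_dvd)
    with less.prems have q: "q \<noteq> 0"
      by auto
    then have "degree p = Suc (degree q)"
      unfolding p by (subst degree_mult_eq) auto
    with less.hyps q have "rf_poly q / nabla (rf_poly q) \<in> shift_factor_products"
      by simp
    moreover have "pcompose [:-\<beta>, 1:] [:1, 1:] = [:1 - \<beta>, 1:]"
      by (simp add: pcompose_pCons)
    then have "rf_poly p / nabla (rf_poly p) = rf_poly q / nabla (rf_poly q) * shift_factor \<beta> 1"
      unfolding p rf_poly_mult nabla_mult nabla_rf_poly shift_factor_rf_poly by (simp add: mult.commute)
    ultimately show ?thesis
      by (metis shift_factor_products.mult_shift_factor)
  qed
qed

lemma nabla_quotients_subset_shift_factor_products: "nabla_quotients \<subseteq> shift_factor_products"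
proof
  fix x
  assume "x \<in> nabla_quotients"
  then obtain h where h: "h \<noteq> 0" "x = h / nabla h"
    unfolding nabla_quotients_def by blast
  obtain p q where "h = Fract p q" and q: "q \<noteq> 0"
    by (cases h)
  with h have p: "p \<noteq> 0" and "h = rf_poly p / rf_poly q"
    by (auto simp: rf_poly_def Zero_fract_def eq_fract)
  with h have x: "x = rf_poly p / nabla (rf_poly p) * inverse (rf_poly q / nabla (rf_poly q))"
    by (simp add: nabla_mult nabla_inverse divide_inverse mult_ac)
  show "x \<in> shift_factor_products"
    unfolding x using p q
    by (intro shift_factor_products_mult shift_factor_products_inverse
        rf_poly_nabla_quotient_in_shift_factor_products)
qed

lemma shift_factor_in_nabla_quotients: "shift_factor \<alpha> a \<in> nabla_quotients"
proof -
  have factor_nat: "shift_factor \<alpha> (int n) \<in> nabla_quotients" for \<alpha> n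
  proof (induction n arbitrary: \<alpha>)
    case 0
    show ?case
      by (simp add: shift_factor_0 nabla_quotients_1)
  next
    case (Suc n)
    have "nabla (rf_poly [:-\<alpha>, 1:]) = rf_poly [:1 - \<alpha>, 1:]"
      by (simp add: nabla_rf_poly pcompose_pCons)
    then have "shift_factor \<alpha> 1 \<in> nabla_quotients"
      unfolding nabla_quotients_def shift_factor_rf_poly
      by (auto intro!: exI[of _ "rf_poly [:-\<alpha>, 1:]"] simp: rf_poly_eq_0_iff)
    with Suc.IH show ?case
      unfolding shift_factor_Suc by (simp add: nabla_quotients_mult)
  qed
  show ?thesis
  proof (cases "a \<ge> 0")
    case True
    then show ?thesis
      using factor_nat[of \<alpha> "nat a"] by simp
  next
    case False
    then obtain n where "a = - int n"
      by (intro that[of "nat (- a)"]) simp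
    then have "shift_factor \<alpha> a = inverse (shift_factor (\<alpha> + of_nat n) (int n))"
      by (simp add: shift_factor_inverse)
    then show ?thesis
      by (simp add: factor_nat nabla_quotients_inverse)
  qed
qed

lemma nabla_quotients_eq_shift_factor_products: "nabla_quotients = shift_factor_products"
proof
  show "shift_factor_products \<subseteq> nabla_quotients"
  proof
    show "x \<in> nabla_quotients" if "x \<in> shift_factor_products" for x
      using that by induction (simp_all add: nabla_quotients_1 nabla_quotients_mult
          shift_factor_in_nabla_quotients)
  qed
qed (rule nabla_quotients_subset_shift_factor_products)

lemma rf_z_commuting_map_eq_mult:
  fixes \<phi> :: "ratfun \<Rightarrow> ratfun"
  assumes add: "\<And>f g. \<phi> (f + g) = \<phi> f + \<phi> g"
    and const: "\<And>c f. \<phi> (rf_const c * f) = rf_const c * \<phi> f"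
    and z: "\<And>f. \<phi> (rf_z * f) = rf_z * \<phi> f"
  shows "\<phi> f = f * \<phi> 1"
proof -
  have poly: "\<phi> (rf_poly p * g) = rf_poly p * \<phi> g" for p g
  proof (induction p arbitrary: g)
    case 0
    have "\<phi> 0 = 0"
      using add[of 0 0] by (metis add.right_neutral add_left_cancel)
    then show ?case
      by (simp add: rf_poly_eq_0_iff[of 0, simplified])
  next
    case (pCons c p g)
    have "\<phi> (rf_poly (pCons c p) * g) = \<phi> (rf_const c * g + rf_z * (rf_poly p * g))"
      by (simp add: rf_poly_pCons algebra_simps)
    also have "\<dots> = rf_const c * \<phi> g + rf_z * (rf_poly p * \<phi> g)"
      by (simp add: add const z pCons.IH)
    also have "\<dots> = rf_poly (pCons c p) * \<phi> g"
      by (simp add: rf_poly_pCons algebra_simps)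
    finally show ?case .
  qed
  obtain p q where f: "f = rf_poly p / rf_poly q" and q: "rf_poly q \<noteq> 0"
    by (cases f) (simp add: rf_poly_def rf_poly_eq_0_iff[unfolded rf_poly_def])
  have "rf_poly q * \<phi> f = \<phi> (rf_poly p * 1)"
    using f q by (simp flip: poly)
  also have "\<dots> = rf_poly p * \<phi> 1"
    by (rule poly)
  finally have "rf_poly q * \<phi> f = rf_poly p * \<phi> 1" .
  with q have "\<phi> f = rf_poly p / rf_poly q * \<phi> 1"
    by (simp add: field_simps)
  with f show ?thesis
    by simp
qed

lemma sl2_iso_casimir_at_1:
  assumes "sl2_iso (casimir_rep \<mu> r1) (casimir_rep \<mu> r2) \<phi>"
  shows "\<phi> 1 \<noteq> 0" and "r1 * \<phi> 1 = r2 * nabla (\<phi> 1)"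
proof -
  have bij: "bij \<phi>" and rep: "\<And>x f. \<phi> (casimir_rep \<mu> r1 x f) = casimir_rep \<mu> r2 x (\<phi> f)"
    using assms unfolding sl2_iso_def by auto
  have mult: "\<phi> f = f * \<phi> 1" for f
    using assms rep[of L0] unfolding sl2_iso_def by (intro rf_z_commuting_map_eq_mult) auto
  show "\<phi> 1 \<noteq> 0"
  proof
    assume "\<phi> 1 = 0"
    with mult[of 0] have "\<phi> 1 = \<phi> 0"
      by simp
    with bij_is_inj[OF bij] show False
      by (metis injD zero_neq_one)
  qed
  show "r1 * \<phi> 1 = r2 * nabla (\<phi> 1)"
    using rep[of L1 1] mult[of "r1 * nabla 1"] by (simp add: nabla_1)
qed

lemma sl2_iso_casimir_mult:
  assumes h: "h \<noteq> 0" and r: "r1 * h = r2 * nabla h"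
  shows "sl2_iso (casimir_rep \<mu> r1) (casimir_rep \<mu> r2) (\<lambda>f. f * h)"
  unfolding sl2_iso_def
proof (intro conjI allI)
  show "bij (\<lambda>f. f * h)"
    using h by (intro o_bij[of "\<lambda>f. f / h"]) (auto simp: fun_eq_iff)
  fix x f
  show "casimir_rep \<mu> r1 x f * h = casimir_rep \<mu> r2 x (f * h)"
  proof (cases x)
    case Lm1
    have r': "nabla_inv r2 * h = nabla_inv r1 * nabla_inv h"
      using arg_cong[OF r, of nabla_inv] by (simp add: nabla_inv_mult nabla_inv_nabla)
    have "nabla_inv h \<noteq> 0"
      using h by (simp add: nabla_inv_def rf_shift_eq_0_iff)
    \<comment> \<open>No hypothesis on \<open>r1\<close> is needed: if \<open>\<nabla>\<^sup>-\<^sup>1 r1 = 0\<close> then also \<open>\<nabla>\<^sup>-\<^sup>1 r2 = 0\<close>, and both sides are \<open>0\<close> as \<open>x / 0 = 0\<close>.\<close>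
    have quot: "h / nabla_inv r1 = nabla_inv h / nabla_inv r2"
    proof (cases "nabla_inv r1 = 0")
      case True
      with r' h show ?thesis
        by simp
    next
      case False
      with r' \<open>nabla_inv h \<noteq> 0\<close> have "nabla_inv r2 \<noteq> 0"
        by auto
      with False r' show ?thesis
        by (simp add: frac_eq_eq mult.commute)
    qed
    have "pi_mu \<mu> / nabla_inv r1 * nabla_inv f * h = pi_mu \<mu> * nabla_inv f * (h / nabla_inv r1)"
      by (simp add: divide_inverse mult_ac)
    also have "\<dots> = pi_mu \<mu> / nabla_inv r2 * (nabla_inv f * nabla_inv h)"
      by (simp add: quot)
    finally show ?thesis
      using Lm1 by (simp add: nabla_inv_mult)
  next
    case L1
    have "r1 * nabla f * h = nabla f * (r1 * h)"
      by (simp add: mult_ac)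
    also have "\<dots> = nabla f * (r2 * nabla h)"
      by (simp only: r)
    also have "\<dots> = r2 * (nabla f * nabla h)"
      by (simp add: mult_ac)
    finally show ?thesis
      using L1 by (simp add: nabla_mult)
  qed (simp add: mult.assoc)
qed (simp_all add: distrib_right mult.assoc)

lemma sl2_isomorphic_casimir_iff:
  assumes r1: "r1 \<noteq> 0"
  shows "sl2_isomorphic (casimir_rep \<mu> r1) (casimir_rep \<mu> r2) \<longleftrightarrow> r2 / r1 \<in> nabla_quotients"
proof
  assume "sl2_isomorphic (casimir_rep \<mu> r1) (casimir_rep \<mu> r2)"
  then obtain \<phi> where \<phi>: "sl2_iso (casimir_rep \<mu> r1) (casimir_rep \<mu> r2) \<phi>"
    unfolding sl2_isomorphic_def by blast
  have "\<phi> 1 \<noteq> 0" and "r1 * \<phi> 1 = r2 * nabla (\<phi> 1)"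
    using sl2_iso_casimir_at_1[OF \<phi>] by blast+
  with r1 have "\<phi> 1 \<noteq> 0 \<and> r2 / r1 = \<phi> 1 / nabla (\<phi> 1)"
    by (simp add: frac_eq_eq nabla_eq_0_iff mult.commute)
  then show "r2 / r1 \<in> nabla_quotients"
    unfolding nabla_quotients_def by blast
next
  assume "r2 / r1 \<in> nabla_quotients"
  then obtain h where h: "h \<noteq> 0" and "r2 / r1 = h / nabla h"
    unfolding nabla_quotients_def by blast
  with r1 have "r1 * h = r2 * nabla h"
    by (simp add: frac_eq_eq nabla_eq_0_iff mult.commute)
  with h show "sl2_isomorphic (casimir_rep \<mu> r1) (casimir_rep \<mu> r2)"
    unfolding sl2_isomorphic_def by (blast intro: sl2_iso_casimir_mult)
qed

theorem theorem9p1: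
  fixes \<mu> :: complex and r1 r2 :: ratfun
  assumes "r1 \<noteq> 0" and "r2 \<noteq> 0"
  shows "sl2_isomorphic (casimir_rep \<mu> r1) (casimir_rep \<mu> r2) \<longleftrightarrow>
    (\<exists>(n::nat) (\<alpha>::nat \<Rightarrow> complex) (a::nat \<Rightarrow> int).
       r2 / r1 = (\<Prod>i<n. (rf_z - rf_const (\<alpha> i)) / (rf_z + rf_const (of_int (a i)) - rf_const (\<alpha> i))))"
proof -
  have "sl2_isomorphic (casimir_rep \<mu> r1) (casimir_rep \<mu> r2) \<longleftrightarrow> r2 / r1 \<in> nabla_quotients"
    using assms(1) by (rule sl2_isomorphic_casimir_iff)
  also have "\<dots> \<longleftrightarrow> r2 / r1 \<in> shift_factor_products"
    by (simp add: nabla_quotients_eq_shift_factor_products)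
  finally show ?thesis
    unfolding shift_factor_products_iff_prod shift_factor_def .
qed

end
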